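(* Let $\mu$ be a positive finite Borel measure on $\mathbb{R}^d$ and $0<\beta\le d$, and assume there exist $\varphi\in L^2(\mu)$ with $\|\varphi\|_{L^2(\mu)}>0$ and a constant $C>0$ such that $|(\varphi\mu)^\wedge(t)|\le C|t|^{-\beta/2}$ for all $t\in\mathbb{R}^d$. Let $\Lambda\subset\mathbb{R}^d$ be countable such that $E(\Lambda)$ is a Fourier frame for $L^2(\mu)$. If $\alpha$ is a real number for which there is a constant $C'$ with $\#\big(\Lambda\cap B(0,r)\big)\le C' r^\alpha$ for all $r\ge1$, then $$\alpha\ge\Big(\frac1\beta+\frac1d\Big)^{-1}.$$
   Context: For a finite complex measure $\nu$ on $\mathbb{R}^d$, $\widehat{\nu}(t)=\int e^{-2\pi i\langle t,x\rangle}d\nu(x)$; $\varphi\mu$ denotes the complex measure with density $\varphi$ with respect to $\mu$. For $\lambda\in\mathbb{R}^d$, $e_\lambda(x)=e^{2\pi i\langle\lambda,x\rangle}$, $E(\Lambda)=\{e_\lambda\}_{\lambda\in\Lambda}$. $E(\Lambda)$ is a Fourier frame for $L^2(\mu)$ if there are $0<A,B<\infty$ with $A\|f\|^2_{L^2(\mu)}\le\sum_{\lambda\in\Lambda}|\langle f,e_\lambda\rangle_{L^2(\mu)}|^2\le B\|f\|^2_{L^2(\mu)}$ for all $f\in L^2(\mu)$. $B(x,r)$ is the open ball of radius $r$ centered at $x$. *)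

theory Defs
  imports "HOL-Analysis.Analysis"
begin

definition expo :: "'a::euclidean_space \<Rightarrow> 'a \<Rightarrow> complex" where
  "expo l x = cis (2 * pi * (l \<bullet> x))"

definition in_L2 :: "'a measure \<Rightarrow> ('a \<Rightarrow> complex) \<Rightarrow> bool" where
  "in_L2 M f \<longleftrightarrow> f \<in> borel_measurable M \<and> integrable M (\<lambda>x. (cmod (f x))\<^sup>2)"

definition L2_norm_sq :: "'a measure \<Rightarrow> ('a \<Rightarrow> complex) \<Rightarrow> real" where
  "L2_norm_sq M f = (LINT x|M. (cmod (f x))\<^sup>2)"

definition L2_inner :: "'a measure \<Rightarrow> ('a \<Rightarrow> complex) \<Rightarrow> ('a \<Rightarrow> complex) \<Rightarrow> complex" where
  "L2_inner M f g = (LINT x|M. f x * cnj (g x))"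

text \<open>Fourier transform of the complex measure phi mu.\<close>
definition fourier_dens :: "'a::euclidean_space measure \<Rightarrow> ('a \<Rightarrow> complex) \<Rightarrow> 'a \<Rightarrow> complex" where
  "fourier_dens M \<phi> t = (LINT x|M. cis (- 2 * pi * (t \<bullet> x)) * \<phi> x)"

definition fourier_frame :: "'a::euclidean_space measure \<Rightarrow> 'a set \<Rightarrow> bool" where
  "fourier_frame M \<Lambda> \<longleftrightarrow> (\<exists>A B. (0::real) < A \<and> 0 < B \<and>
     (\<forall>f. in_L2 M f \<longrightarrow>
        (\<lambda>l. (cmod (L2_inner M f (expo l)))\<^sup>2) summable_on \<Lambda> \<and>
        A * L2_norm_sq M f \<le> (\<Sum>\<^sub>\<infinity>l\<in>\<Lambda>. (cmod (L2_inner M f (expo l)))\<^sup>2) \<and>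
        (\<Sum>\<^sub>\<infinity>l\<in>\<Lambda>. (cmod (L2_inner M f (expo l)))\<^sup>2) \<le> B * L2_norm_sq M f))"

end

theory Submission
  imports Defs
begin

text \<open>
  Modulating \<open>\<phi>\<close> by \<open>e_s\<close> preserves its norm and turns its frame coefficients into the values
  \<open>(\<phi>\<mu>)^(\<lambda> - s)\<close>, so the lower frame bound gives \<open>\<Sum>\<^sub>\<lambda> |(\<phi>\<mu>)^(\<lambda> - s)|\<^sup>2 \<ge> A \<parallel>\<phi>\<parallel>\<^sup>2\<close>
  uniformly in \<open>s\<close>. Conversely, if \<open>#(\<Lambda> \<inter> B(0,r)) \<le> C r^\<alpha>\<close>, the \<open>x \<approx> R^\<alpha>\<close> points of \<open>\<Lambda>\<close>
  in \<open>B(0,2R)\<close> miss one of \<open>\<approx> x\<close> disjoint balls of radius \<open>\<approx> R x^(-1/d)\<close> centred on a grid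
  in \<open>B(0,R)\<close>. Taking \<open>s\<close> at its centre, the decay \<open>|(\<phi>\<mu>)^(t)|\<^sup>2 \<le> C\<^sup>2 |t|^(-\<beta>)\<close> bounds
  the contribution of the near points by \<open>R^(\<alpha> + (\<alpha>/d - 1)\<beta>)\<close> and, summing over dyadic
  shells, that of the far points by \<open>R^(\<alpha> - \<beta>)\<close>, up to constants. For \<open>\<alpha> < (1/\<beta> + 1/d)\<inverse>\<close>
  both exponents are negative, so letting \<open>R \<rightarrow> \<infinity>\<close> contradicts the frame bound.
\<close>

definition counting_bound :: "'a::real_normed_vector set \<Rightarrow> real \<Rightarrow> real \<Rightarrow> bool" where
  "counting_bound \<Lambda> C \<alpha> \<longleftrightarrow>
     (\<forall>r\<ge>1. finite (\<Lambda> \<inter> ball 0 r) \<and> real (card (\<Lambda> \<inter> ball 0 r)) \<le> C * r powr \<alpha>)"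

lemma counting_boundD:
  assumes "counting_bound \<Lambda> C \<alpha>" "1 \<le> r"
  shows "finite (\<Lambda> \<inter> ball 0 r)" "real (card (\<Lambda> \<inter> ball 0 r)) \<le> C * r powr \<alpha>"
  using assms unfolding counting_bound_def by auto

lemma counting_bound_nonneg: "counting_bound \<Lambda> C \<alpha> \<Longrightarrow> 0 \<le> C"
  using counting_boundD(2)[of \<Lambda> C \<alpha> 1] by simp

lemma counting_bound_mono:
  assumes "counting_bound \<Lambda> C \<alpha>" "C \<le> C'" "\<alpha> \<le> \<alpha>'"
  shows "counting_bound \<Lambda> C' \<alpha>'"
  unfolding counting_bound_def
proof (intro allI impI conjI)
  fix r :: real assume r: "1 \<le> r"
  show "finite (\<Lambda> \<inter> ball 0 r)" using counting_boundD(1)[OF assms(1) r] .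
  have "0 \<le> C'" using counting_bound_nonneg[OF assms(1)] assms(2) by linarith
  have "real (card (\<Lambda> \<inter> ball 0 r)) \<le> C * r powr \<alpha>" using counting_boundD(2)[OF assms(1) r] .
  also have "\<dots> \<le> C' * r powr \<alpha>" using assms(2) by (intro mult_right_mono) auto
  also have "\<dots> \<le> C' * r powr \<alpha>'" using \<open>0 \<le> C'\<close> r assms(3) by (intro mult_left_mono powr_mono) auto
  finally show "real (card (\<Lambda> \<inter> ball 0 r)) \<le> C' * r powr \<alpha>'" .
qed

lemma int_eq_if_near_same_multiple:
  fixes i j :: int and y \<rho> :: real
  assumes "0 < \<rho>" "\<bar>y - 2 * \<rho> * i\<bar> < \<rho>" "\<bar>y - 2 * \<rho> * j\<bar> < \<rho>"
  shows "i = j"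
proof -
  have "\<rho> * (of_int i - of_int j) < \<rho> * 1" "\<rho> * (of_int j - of_int i) < \<rho> * 1"
    using assms(2,3) unfolding abs_less_iff right_diff_distrib by linarith+
  then have "of_int i - of_int j < (1::real)" "of_int j - of_int i < (1::real)"
    unfolding mult_less_cancel_left_pos[OF assms(1)] .
  then show ?thesis by linarith
qed

lemma exists_grid_point_far_from_finite_set:
  fixes S :: "'a::euclidean_space set" and \<rho> :: real and m :: nat
  assumes "finite S" "0 < \<rho>" "card S < (2 * m + 1) ^ DIM('a)"
  shows "\<exists>c. norm c \<le> 2 * \<rho> * m * DIM('a) \<and> (\<forall>l\<in>S. \<rho> \<le> norm (l - c))"
proof (rule ccontr)
  assume no_hole: "\<not> ?thesis"
  define K where "K = PiE (Basis :: 'a set) (\<lambda>_. {-int m..int m})"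
  define grid where "grid k = (\<Sum>b\<in>Basis. (2 * \<rho> * of_int (k b)) *\<^sub>R b)" for k :: "'a \<Rightarrow> int"
  have grid_inner: "grid k \<bullet> b = 2 * \<rho> * of_int (k b)" if "b \<in> Basis" for k b
    unfolding grid_def using that by (simp add: inner_sum_left_Basis)
  have norm_grid: "norm (grid k) \<le> 2 * \<rho> * m * DIM('a)" if "k \<in> K" for k
  proof -
    have "norm (grid k) \<le> (\<Sum>b\<in>Basis. norm ((2 * \<rho> * of_int (k b)) *\<^sub>R b))"
      unfolding grid_def by (rule norm_sum)
    also have "\<dots> \<le> (\<Sum>b\<in>(Basis :: 'a set). 2 * \<rho> * m)"
    proof (rule sum_mono)
      fix b :: 'a assume b: "b \<in> Basis"
      then have "\<bar>real_of_int (k b)\<bar> \<le> real m"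
        using that unfolding K_def by (auto simp: PiE_def Pi_def)
      then show "norm ((2 * \<rho> * of_int (k b)) *\<^sub>R b) \<le> 2 * \<rho> * m"
        using b assms(2) by (simp add: abs_mult)
    qed
    finally show ?thesis by (simp add: mult_ac)
  qed
  have "\<exists>l\<in>S. norm (l - grid k) < \<rho>" if "k \<in> K" for k
    using no_hole norm_grid[OF that] by force
  then obtain f where f: "\<And>k. k \<in> K \<Longrightarrow> f k \<in> S \<and> norm (f k - grid k) < \<rho>"
    by metis
  have "inj_on f K"
  proof (rule inj_onI, rule ext)
    fix k k' b assume k: "k \<in> K" and k': "k' \<in> K" and eq: "f k = f k'"
    show "k b = k' b"
    proof (cases "b \<in> Basis")
      case True
      have "\<bar>(f k - grid k) \<bullet> b\<bar> < \<rho>" "\<bar>(f k - grid k') \<bullet> b\<bar> < \<rho>"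
        using Basis_le_norm[OF True] f[OF k] f[OF k'] eq by (metis order_le_less_trans)+
      then show ?thesis
        using int_eq_if_near_same_multiple[OF assms(2)] grid_inner[OF True]
        by (simp add: inner_diff_left)
    next
      case False
      then show ?thesis using k k' unfolding K_def by (auto simp: PiE_def extensional_def)
    qed
  qed
  moreover have "f ` K \<subseteq> S" using f by auto
  ultimately have "card K \<le> card S" using assms(1) by (meson card_inj_on_le)
  moreover have "card K = (2 * m + 1) ^ DIM('a)"
    unfolding K_def by (simp add: card_PiE nat_add_distrib nat_mult_distrib)
  ultimately show False using assms(3) by simp
qed

lemma exists_point_far_from_small_set:
  fixes S :: "'a::euclidean_space set"
  assumes "finite S" "real (card S) \<le> x" "1 \<le> x" "0 < R"
  shows "\<exists>c. norm c \<le> R \<and>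
           (\<forall>l\<in>S. R / (4 * DIM('a) * x powr (1 / DIM('a))) \<le> norm (l - c))"
proof -
  define d where "d = real DIM('a)"
  define xd where "xd = x powr (1 / d)"
  define m where "m = nat \<lceil>xd\<rceil>"
  have d: "1 \<le> d" unfolding d_def by (simp add: DIM_positive Suc_le_eq)
  have "1 \<le> xd" unfolding xd_def using assms(3) d by (intro ge_one_powr_ge_zero) auto
  then have m: "xd \<le> real m" "real m \<le> 2 * xd" "0 < real m" unfolding m_def by linarith+
  have "real (card S) \<le> xd ^ DIM('a)"
    using assms(2,3) d unfolding xd_def d_def by (simp add: powr_power)
  also have "\<dots> \<le> real m ^ DIM('a)" using m \<open>1 \<le> xd\<close> by (intro power_mono) auto
  also have "\<dots> < real (2 * m + 1) ^ DIM('a)" by (intro power_strict_mono) auto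
  finally have "card S < (2 * m + 1) ^ DIM('a)" by (metis of_nat_less_iff of_nat_power)
  moreover define \<rho> where "\<rho> = R / (2 * m * d)"
  moreover have "0 < \<rho>" unfolding \<rho>_def using assms(4) m d by simp
  ultimately obtain c where c: "norm c \<le> 2 * \<rho> * m * DIM('a)" "\<forall>l\<in>S. \<rho> \<le> norm (l - c)"
    using exists_grid_point_far_from_finite_set[OF assms(1)] by blast
  have "2 * \<rho> * m * DIM('a) = R" unfolding \<rho>_def d_def using m d d_def by simp
  moreover have "R / (4 * d * xd) \<le> \<rho>"
    unfolding \<rho>_def using assms(4) m d by (intro divide_left_mono) auto
  ultimately show ?thesis using c unfolding d_def xd_def by force
qed

lemma powr_floor_log_bounds:
  fixes x :: real
  assumes "1 \<le> x"
  shows "2 powr real (nat \<lfloor>log 2 x\<rfloor>) \<le> x" "x < 2 * 2 powr real (nat \<lfloor>log 2 x\<rfloor>)"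
proof -
  have "real (nat \<lfloor>log 2 x\<rfloor>) = real_of_int \<lfloor>log 2 x\<rfloor>" using assms by simp
  moreover have "real_of_int \<lfloor>log 2 x\<rfloor> \<le> log 2 x" "log 2 x < real_of_int \<lfloor>log 2 x\<rfloor> + 1"
    by linarith+
  ultimately have "2 powr real (nat \<lfloor>log 2 x\<rfloor>) \<le> 2 powr (log 2 x)"
    "2 powr (log 2 x) < 2 powr (real (nat \<lfloor>log 2 x\<rfloor>) + 1)"
    by simp_all
  then show "2 powr real (nat \<lfloor>log 2 x\<rfloor>) \<le> x" "x < 2 * 2 powr real (nat \<lfloor>log 2 x\<rfloor>)"
    using assms by (simp_all add: powr_add)
qed

lemma sum_le_on_shell:
  fixes \<Lambda> F :: "'a::real_normed_vector set"
  assumes \<Lambda>: "counting_bound \<Lambda> C \<alpha>" and "0 < a" "1 \<le> 2 * a" "0 \<le> \<beta>" "0 \<le> K"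
    and F: "F \<subseteq> \<Lambda>" "\<forall>l\<in>F. a \<le> norm l \<and> norm l < 2 * a"
    and g: "\<forall>l\<in>F. g l \<le> K * norm l powr (-\<beta>)"
  shows "sum g F \<le> K * C * 2 powr \<alpha> * a powr (\<alpha> - \<beta>)"
proof -
  have sub: "F \<subseteq> \<Lambda> \<inter> ball 0 (2 * a)" using F by auto
  have "real (card F) \<le> real (card (\<Lambda> \<inter> ball 0 (2 * a)))"
    using card_mono[OF counting_boundD(1)[OF \<Lambda> \<open>1 \<le> 2 * a\<close>] sub] by simp
  also have "\<dots> \<le> C * (2 * a) powr \<alpha>" using counting_boundD(2)[OF \<Lambda> \<open>1 \<le> 2 * a\<close>] .
  finally have card: "real (card F) \<le> C * (2 * a) powr \<alpha>" .
  have "sum g F \<le> (\<Sum>l\<in>F. K * a powr (-\<beta>))"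
  proof (rule sum_mono)
    fix l assume "l \<in> F"
    then have "g l \<le> K * norm l powr (-\<beta>)" "a \<le> norm l" using g F by auto
    then show "g l \<le> K * a powr (-\<beta>)"
      using powr_mono2'[of "-\<beta>" a "norm l"] assms(2,4,5) by (smt (verit) mult_left_mono)
  qed
  also have "\<dots> = real (card F) * (K * a powr (-\<beta>))" by simp
  also have "\<dots> \<le> C * (2 * a) powr \<alpha> * (K * a powr (-\<beta>))"
    using card assms(5) by (intro mult_right_mono) auto
  also have "\<dots> = K * C * 2 powr \<alpha> * a powr (\<alpha> - \<beta>)"
    using assms(2) by (simp add: powr_mult powr_diff powr_minus divide_inverse)
  finally show ?thesis .
qed

lemma infsum_le_outside_ball:
  fixes \<Lambda> :: "'a::real_normed_vector set" and g :: "'a \<Rightarrow> real"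
  assumes \<Lambda>: "counting_bound \<Lambda> C \<alpha>" and "\<alpha> < \<beta>" "0 \<le> \<beta>" "1 \<le> T" "0 \<le> K"
    and g: "\<forall>l\<in>\<Lambda>. T \<le> norm l \<longrightarrow> g l \<le> K * norm l powr (-\<beta>)"
    and summable: "g summable_on (\<Lambda> - ball 0 T)"
  shows "infsum g (\<Lambda> - ball 0 T) \<le> K * C * 2 powr \<alpha> * T powr (\<alpha> - \<beta>) / (1 - 2 powr (\<alpha> - \<beta>))"
proof (rule infsum_le_finite_sums[OF summable])
  define q where "q = 2 powr (\<alpha> - \<beta>)"
  have q: "0 \<le> q" "q < 1" using \<open>\<alpha> < \<beta>\<close> powr_less_cancel_iff[of 2 "\<alpha> - \<beta>" 0] unfolding q_def by auto
  have KCT: "0 \<le> K * C * 2 powr \<alpha> * T powr (\<alpha> - \<beta>)"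
    using counting_bound_nonneg[OF \<Lambda>] \<open>0 \<le> K\<close> by simp
  fix F assume F: "finite F" "F \<subseteq> \<Lambda> - ball 0 T"
  \<comment> \<open>\<open>shell l = k\<close> iff \<open>2^k T \<le> |l| < 2^(k+1) T\<close>\<close>
  define shell where "shell l = nat \<lfloor>log 2 (norm l / T)\<rfloor>" for l :: 'a
  obtain N where N: "shell ` F \<subseteq> {..<N}"
    using F(1) by (metis finite_imageI finite_nat_iff_bounded)
  have "sum g F = (\<Sum>k<N. sum g {l\<in>F. shell l = k})"
    using sum.group[OF F(1) _ N, of g] by simp
  also have "\<dots> \<le> (\<Sum>k<N. K * C * 2 powr \<alpha> * T powr (\<alpha> - \<beta>) * q ^ k)"
  proof (rule sum_mono)
    fix k
    define a where "a = 2 powr real k * T"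
    have "1 \<le> 2 powr real k" by (rule ge_one_powr_ge_zero) auto
    then have "T \<le> a" using \<open>1 \<le> T\<close> mult_right_mono[of 1 "2 powr real k" T] unfolding a_def by simp
    have in_shell: "a \<le> norm l \<and> norm l < 2 * a" if "l \<in> F" "shell l = k" for l
    proof -
      have "1 \<le> norm l / T" using F that \<open>1 \<le> T\<close> by auto
      from powr_floor_log_bounds[OF this] that(2) show ?thesis
        using \<open>1 \<le> T\<close> unfolding a_def shell_def by (simp add: field_simps)
    qed
    have "sum g {l\<in>F. shell l = k} \<le> K * C * 2 powr \<alpha> * a powr (\<alpha> - \<beta>)"
      using F \<open>1 \<le> T\<close> \<open>T \<le> a\<close> in_shell g assms(3,5)
      by (intro sum_le_on_shell[OF \<Lambda>]) auto
    also have "a powr (\<alpha> - \<beta>) = T powr (\<alpha> - \<beta>) * q ^ k"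
      unfolding a_def q_def using \<open>1 \<le> T\<close> by (simp add: powr_mult powr_powr powr_power mult_ac)
    finally show "sum g {l\<in>F. shell l = k} \<le> K * C * 2 powr \<alpha> * T powr (\<alpha> - \<beta>) * q ^ k"
      by (simp add: mult_ac)
  qed
  also have "\<dots> = K * C * 2 powr \<alpha> * T powr (\<alpha> - \<beta>) * (\<Sum>k<N. q ^ k)"
    by (simp add: sum_distrib_left)
  also have "\<dots> \<le> K * C * 2 powr \<alpha> * T powr (\<alpha> - \<beta>) * (1 / (1 - q))"
    using q KCT by (intro mult_left_mono) (auto simp: sum_gp_strict divide_right_mono)
  finally show "sum g F \<le> K * C * 2 powr \<alpha> * T powr (\<alpha> - \<beta>) / (1 - 2 powr (\<alpha> - \<beta>))"
    by (simp add: q_def)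
qed

lemma decay_le_at_distance:
  fixes h :: "'a::real_normed_vector \<Rightarrow> real"
  assumes "\<forall>v. v \<noteq> 0 \<longrightarrow> h v \<le> K * norm v powr (-\<beta>)" "0 \<le> \<beta>" "0 \<le> K" "0 < r" "r \<le> norm v"
  shows "h v \<le> K * r powr (-\<beta>)"
proof -
  have "v \<noteq> 0" using assms(4,5) by auto
  then have "h v \<le> K * norm v powr (-\<beta>)" using assms(1) by blast
  also have "\<dots> \<le> K * r powr (-\<beta>)"
    using powr_mono2'[of "-\<beta>" r "norm v"] assms(2-5) by (intro mult_left_mono) auto
  finally show ?thesis .
qed

lemma exists_translate_sum_le:
  fixes \<Lambda> :: "'a::euclidean_space set" and h :: "'a \<Rightarrow> real" and C \<alpha> \<beta> K R :: real
  defines "d \<equiv> real DIM('a)" and "x \<equiv> C * (2 * R) powr \<alpha>"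
  assumes \<Lambda>: "counting_bound \<Lambda> C \<alpha>" and "1 \<le> C" "0 \<le> \<alpha>" "\<alpha> < \<beta>" "0 \<le> K" "1 \<le> R"
    and h: "\<forall>v. v \<noteq> 0 \<longrightarrow> h v \<le> K * norm v powr (-\<beta>)"
    and summable: "\<forall>c. (\<lambda>l. h (l - c)) summable_on \<Lambda>"
  shows "\<exists>c. (\<Sum>\<^sub>\<infinity>l\<in>\<Lambda>. h (l - c)) \<le> K * x * (4 * d * x powr (1 / d) / R) powr \<beta>
                 + K * 2 powr \<beta> * C * 2 powr \<alpha> * (2 * R) powr (\<alpha> - \<beta>) / (1 - 2 powr (\<alpha> - \<beta>))"
proof -
  have "0 \<le> \<beta>" using assms(5,6) by linarith
  define S where "S = \<Lambda> \<inter> ball 0 (2 * R)"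
  have "1 \<le> 2 * R" using \<open>1 \<le> R\<close> by simp
  then have S: "finite S" "real (card S) \<le> x"
    using counting_boundD[OF \<Lambda>] unfolding S_def x_def by auto
  have "1 \<le> (2 * R) powr \<alpha>" using \<open>1 \<le> 2 * R\<close> \<open>0 \<le> \<alpha>\<close> by (intro ge_one_powr_ge_zero)
  then have "1 \<le> x" unfolding x_def using \<open>1 \<le> C\<close> mult_mono[of 1 C 1 "(2 * R) powr \<alpha>"] by simp
  define \<rho> where "\<rho> = R / (4 * d * x powr (1 / d))"
  obtain c where c: "norm c \<le> R" "\<forall>l\<in>S. \<rho> \<le> norm (l - c)"
    using exists_point_far_from_small_set[OF S \<open>1 \<le> x\<close>, of R] \<open>1 \<le> R\<close>
    unfolding \<rho>_def d_def by auto
  have "0 < \<rho>" unfolding \<rho>_def d_def using \<open>1 \<le> R\<close> \<open>1 \<le> x\<close> by simp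
  have h_le_from: "h (l - c) \<le> K * r powr (-\<beta>)" if "0 < r" "r \<le> norm (l - c)" for l r
    using decay_le_at_distance[OF h \<open>0 \<le> \<beta>\<close> \<open>0 \<le> K\<close> that] .
  have near: "(\<Sum>l\<in>S. h (l - c)) \<le> K * x * (4 * d * x powr (1 / d) / R) powr \<beta>"
  proof -
    have "(\<Sum>l\<in>S. h (l - c)) \<le> (\<Sum>l\<in>S. K * \<rho> powr (-\<beta>))"
      using c(2) \<open>0 < \<rho>\<close> h_le_from by (intro sum_mono) auto
    also have "\<dots> \<le> x * (K * \<rho> powr (-\<beta>))"
      using S(2) \<open>0 \<le> K\<close> by (simp add: mult_right_mono)
    also have "\<rho> powr (-\<beta>) = (4 * d * x powr (1 / d) / R) powr \<beta>"
      unfolding \<rho>_def using \<open>0 < \<rho>\<close> unfolding \<rho>_def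
      by (simp add: powr_minus_divide powr_divide)
    finally show ?thesis by (simp add: mult_ac)
  qed
  have far: "(\<Sum>\<^sub>\<infinity>l\<in>\<Lambda> - ball 0 (2 * R). h (l - c))
      \<le> K * 2 powr \<beta> * C * 2 powr \<alpha> * (2 * R) powr (\<alpha> - \<beta>) / (1 - 2 powr (\<alpha> - \<beta>))"
  proof (rule infsum_le_outside_ball[OF \<Lambda> \<open>\<alpha> < \<beta>\<close> \<open>0 \<le> \<beta>\<close> \<open>1 \<le> 2 * R\<close>])
    show "0 \<le> K * 2 powr \<beta>" using \<open>0 \<le> K\<close> by simp
    show "(\<lambda>l. h (l - c)) summable_on \<Lambda> - ball 0 (2 * R)"
      using summable by (blast intro: summable_on_subset_banach)
    show "\<forall>l\<in>\<Lambda>. 2 * R \<le> norm l \<longrightarrow> h (l - c) \<le> K * 2 powr \<beta> * norm l powr (-\<beta>)"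
    proof (intro ballI impI)
      fix l assume "l \<in> \<Lambda>" "2 * R \<le> norm l"
      then have "0 < norm l / 2" "norm l / 2 \<le> norm (l - c)"
        using c(1) norm_triangle_ineq2[of l c] \<open>1 \<le> R\<close> by linarith+
      then have "h (l - c) \<le> K * (norm l / 2) powr (-\<beta>)" by (rule h_le_from)
      also have "(norm l / 2) powr (-\<beta>) = 2 powr \<beta> * norm l powr (-\<beta>)"
        by (simp add: powr_divide powr_minus field_simps)
      finally show "h (l - c) \<le> K * 2 powr \<beta> * norm l powr (-\<beta>)"
        by (simp add: mult_ac)
    qed
  qed
  have split: "\<Lambda> = S \<union> (\<Lambda> - ball 0 (2 * R))" "S \<inter> (\<Lambda> - ball 0 (2 * R)) = {}"
    unfolding S_def by auto
  have "(\<lambda>l. h (l - c)) summable_on S" "(\<lambda>l. h (l - c)) summable_on \<Lambda> - ball 0 (2 * R)"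
    using summable by (auto intro: summable_on_subset_banach simp: S_def)
  from infsum_Un_disjoint[OF this split(2)] split(1) S(1)
  have "(\<Sum>\<^sub>\<infinity>l\<in>\<Lambda>. h (l - c)) = (\<Sum>l\<in>S. h (l - c)) + (\<Sum>\<^sub>\<infinity>l\<in>\<Lambda> - ball 0 (2 * R). h (l - c))"
    by simp
  then show ?thesis using near far by (intro exI[of _ c]) linarith
qed

lemma below_critical_exponent:
  fixes \<alpha> \<beta> d :: real
  assumes "0 < \<beta>" "1 \<le> d" "0 \<le> \<alpha>" "\<alpha> < inverse (1 / \<beta> + 1 / d)"
  shows "\<alpha> + (\<alpha> / d - 1) * \<beta> < 0" "\<alpha> < \<beta>"
proof -
  have "inverse (1 / \<beta> + 1 / d) = \<beta> * d / (\<beta> + d)"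
    using assms(1,2) by (simp add: field_simps)
  then have critical: "\<alpha> * \<beta> + \<alpha> * d < \<beta> * d"
    using assms(1,2,4) by (simp add: pos_less_divide_eq distrib_left)
  then show "\<alpha> + (\<alpha> / d - 1) * \<beta> < 0"
    using assms(2) by (simp add: field_simps)
  have "\<alpha> * d < \<beta> * d" using critical assms(1,3) by (smt (verit) mult_nonneg_nonneg)
  then show "\<alpha> < \<beta>" using assms(2) by simp
qed

lemma translate_sum_arbitrarily_small:
  fixes \<Lambda> :: "'a::euclidean_space set" and h :: "'a \<Rightarrow> real"
  assumes \<Lambda>: "counting_bound \<Lambda> C \<alpha>" and "1 \<le> C" "0 \<le> \<alpha>" "0 < \<beta>" "0 \<le> K" "0 < \<epsilon>"
    and \<alpha>_less: "\<alpha> < inverse (1 / \<beta> + 1 / real DIM('a))"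
    and h: "\<forall>v. v \<noteq> 0 \<longrightarrow> h v \<le> K * norm v powr (-\<beta>)"
    and summable: "\<forall>c. (\<lambda>l. h (l - c)) summable_on \<Lambda>"
  shows "\<exists>c. (\<Sum>\<^sub>\<infinity>l\<in>\<Lambda>. h (l - c)) < \<epsilon>"
proof -
  define d where "d = real DIM('a)"
  have d: "1 \<le> d" unfolding d_def by (simp add: DIM_positive Suc_le_eq)
  have near_exponent: "\<alpha> + (\<alpha> / d - 1) * \<beta> < 0" and far_exponent: "\<alpha> < \<beta>"
    using below_critical_exponent[OF \<open>0 < \<beta>\<close> d \<open>0 \<le> \<alpha>\<close>] \<alpha>_less unfolding d_def by auto
  define near where "near R = K * (C * (2 * R) powr \<alpha>)
      * (4 * d * (C * (2 * R) powr \<alpha>) powr (1 / d) / R) powr \<beta>" for R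
  define far where "far R = K * 2 powr \<beta> * C * 2 powr \<alpha> * (2 * R) powr (\<alpha> - \<beta>)
      / (1 - 2 powr (\<alpha> - \<beta>))" for R
  define K0 where "K0 = 4 * d * C powr (1 / d) * 2 powr (\<alpha> / d)"
  define K1 where "K1 = K * C * 2 powr \<alpha> * K0 powr \<beta>"
  define K2 where "K2 = K * 2 powr \<beta> * C * 2 powr \<alpha> * 2 powr (\<alpha> - \<beta>) / (1 - 2 powr (\<alpha> - \<beta>))"
  have "0 < K0" using d \<open>1 \<le> C\<close> by (simp add: K0_def)
  have power_law: "near R + far R = K1 * R powr (\<alpha> + (\<alpha> / d - 1) * \<beta>) + K2 * R powr (\<alpha> - \<beta>)"
    if "0 < R" for R
  proof -
    have "4 * d * (C * (2 * R) powr \<alpha>) powr (1 / d) / R = K0 * R powr (\<alpha> / d - 1)"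
      unfolding K0_def using that \<open>1 \<le> C\<close> by (simp add: powr_mult powr_powr powr_diff)
    moreover have "(K0 * R powr (\<alpha> / d - 1)) powr \<beta> = K0 powr \<beta> * R powr ((\<alpha> / d - 1) * \<beta>)"
      using that \<open>0 < K0\<close> by (simp add: powr_mult powr_powr)
    ultimately have "near R = K1 * R powr (\<alpha> + (\<alpha> / d - 1) * \<beta>)"
      unfolding near_def K1_def using that by (simp add: powr_mult powr_add mult_ac)
    moreover have "far R = K2 * R powr (\<alpha> - \<beta>)"
      unfolding far_def K2_def using that by (simp add: powr_mult)
    ultimately show ?thesis by simp
  qed
  have "((\<lambda>R. K1 * R powr (\<alpha> + (\<alpha> / d - 1) * \<beta>) + K2 * R powr (\<alpha> - \<beta>)) \<longlongrightarrow> K1 * 0 + K2 * 0) at_top"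
    using near_exponent far_exponent
    by (intro tendsto_add tendsto_mult tendsto_const tendsto_neg_powr filterlim_ident) auto
  moreover have "eventually (\<lambda>R. K1 * R powr (\<alpha> + (\<alpha> / d - 1) * \<beta>) + K2 * R powr (\<alpha> - \<beta>)
      = near R + far R) at_top"
    using eventually_gt_at_top[of 0] by eventually_elim (simp add: power_law)
  ultimately have "((\<lambda>R. near R + far R) \<longlongrightarrow> 0) at_top"
    by (simp add: Lim_transform_eventually)
  from order_tendstoD(2)[OF this \<open>0 < \<epsilon>\<close>] eventually_ge_at_top[of 1]
  have "eventually (\<lambda>R. near R + far R < \<epsilon> \<and> 1 \<le> R) at_top"
    by (rule eventually_conj)
  then obtain R where "1 \<le> R" "near R + far R < \<epsilon>"
    unfolding eventually_at_top_linorder by blast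
  with exists_translate_sum_le[OF \<Lambda> \<open>1 \<le> C\<close> \<open>0 \<le> \<alpha>\<close> far_exponent \<open>0 \<le> K\<close> \<open>1 \<le> R\<close> h summable]
  show ?thesis unfolding near_def far_def d_def by (meson order.strict_trans1)
qed

lemma expo_borel_measurable:
  assumes "sets M = sets borel"
  shows "expo s \<in> borel_measurable M"
proof -
  have "continuous_on UNIV (expo s)" unfolding expo_def by (intro continuous_intros)
  then show ?thesis
    using borel_measurable_continuous_onI measurable_cong_sets[OF assms refl] by blast
qed

lemma cmod_mult_expo [simp]: "cmod (f x * expo s x) = cmod (f x)"
  by (simp add: norm_mult expo_def)

lemma in_L2_mult_expo:
  assumes "sets M = sets borel" "in_L2 M f"
  shows "in_L2 M (\<lambda>x. f x * expo s x)"
  using assms expo_borel_measurable[OF assms(1)] unfolding in_L2_def by auto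

lemma L2_norm_sq_mult_expo: "L2_norm_sq M (\<lambda>x. f x * expo s x) = L2_norm_sq M f"
  unfolding L2_norm_sq_def by simp

lemma L2_inner_mult_expo: "L2_inner M (\<lambda>x. f x * expo s x) (expo l) = fourier_dens M f (l - s)"
proof -
  have "f x * expo s x * cnj (expo l x) = cis (- 2 * pi * ((l - s) \<bullet> x)) * f x" for x
    unfolding expo_def cis_cnj by (simp add: cis_mult inner_diff_left algebra_simps)
  then show ?thesis unfolding L2_inner_def fourier_dens_def by (simp only:)
qed

lemma fourier_frame_lower_bound_translates:
  assumes "sets M = sets borel" "fourier_frame M \<Lambda>" "in_L2 M \<phi>"
  obtains A where "0 < A" "\<And>s. (\<lambda>l. (cmod (fourier_dens M \<phi> (l - s)))\<^sup>2) summable_on \<Lambda>"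
    "\<And>s. A * L2_norm_sq M \<phi> \<le> (\<Sum>\<^sub>\<infinity>l\<in>\<Lambda>. (cmod (fourier_dens M \<phi> (l - s)))\<^sup>2)"
proof -
  obtain A where "0 < A" and frame: "\<And>f. in_L2 M f \<Longrightarrow>
      (\<lambda>l. (cmod (L2_inner M f (expo l)))\<^sup>2) summable_on \<Lambda> \<and>
      A * L2_norm_sq M f \<le> (\<Sum>\<^sub>\<infinity>l\<in>\<Lambda>. (cmod (L2_inner M f (expo l)))\<^sup>2)"
    using assms(2) unfolding fourier_frame_def by blast
  show ?thesis
    using that[OF \<open>0 < A\<close>] frame[OF in_L2_mult_expo[OF assms(1,3)]]
    unfolding L2_norm_sq_mult_expo L2_inner_mult_expo by blast
qed

lemma power2_le_powr_of_le:
  fixes a C r \<beta> :: real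
  assumes "0 \<le> a" "a \<le> C * r powr (- \<beta> / 2)" "0 < r"
  shows "a\<^sup>2 \<le> C\<^sup>2 * r powr (-\<beta>)"
proof -
  have "a\<^sup>2 \<le> (C * r powr (- \<beta> / 2))\<^sup>2" using assms(1,2) by (intro power_mono)
  then show ?thesis using assms(3) by (simp add: power_mult_distrib powr_power)
qed

theorem lemma3p2:
  fixes M :: "'a::euclidean_space measure" and \<beta> \<alpha> :: real and \<Lambda> :: "'a set"
  assumes "sets M = sets borel" and "finite_measure M"
    and "0 < \<beta>" and "\<beta> \<le> real DIM('a)"
    and "\<exists>\<phi> C. in_L2 M \<phi> \<and> L2_norm_sq M \<phi> > 0 \<and> C > 0 \<and>
           (\<forall>t. t \<noteq> 0 \<longrightarrow> cmod (fourier_dens M \<phi> t) \<le> C * norm t powr (- \<beta> / 2))"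
    and "countable \<Lambda>" and "fourier_frame M \<Lambda>"
    and "\<exists>C'. \<forall>r\<ge>1. finite (\<Lambda> \<inter> ball 0 r) \<and> real (card (\<Lambda> \<inter> ball 0 r)) \<le> C' * r powr \<alpha>"
  shows "\<alpha> \<ge> inverse (1 / \<beta> + 1 / real DIM('a))"
proof (rule ccontr)
  assume "\<not> ?thesis"
  then have "max \<alpha> 0 < inverse (1 / \<beta> + 1 / real DIM('a))"
    using \<open>0 < \<beta>\<close> by (simp add: add_pos_pos)
  obtain \<phi> C where \<phi>: "in_L2 M \<phi>" "L2_norm_sq M \<phi> > 0"
    and decay: "\<forall>t. t \<noteq> 0 \<longrightarrow> cmod (fourier_dens M \<phi> t) \<le> C * norm t powr (- \<beta> / 2)"
    using assms(5) by blast
  obtain C' where "counting_bound \<Lambda> C' \<alpha>"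
    using assms(8) unfolding counting_bound_def by blast
  then have \<Lambda>: "counting_bound \<Lambda> (max C' 1) (max \<alpha> 0)"
    by (rule counting_bound_mono) auto
  obtain A where "0 < A"
    and frame: "\<And>s. (\<lambda>l. (cmod (fourier_dens M \<phi> (l - s)))\<^sup>2) summable_on \<Lambda>"
      "\<And>s. A * L2_norm_sq M \<phi> \<le> (\<Sum>\<^sub>\<infinity>l\<in>\<Lambda>. (cmod (fourier_dens M \<phi> (l - s)))\<^sup>2)"
    using fourier_frame_lower_bound_translates[OF assms(1,7) \<phi>(1)] by blast
  have decay_sq: "\<forall>v. v \<noteq> 0 \<longrightarrow> (cmod (fourier_dens M \<phi> v))\<^sup>2 \<le> C\<^sup>2 * norm v powr (-\<beta>)"
    using decay by (auto intro: power2_le_powr_of_le)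
  have "\<exists>c. (\<Sum>\<^sub>\<infinity>l\<in>\<Lambda>. (cmod (fourier_dens M \<phi> (l - c)))\<^sup>2) < A * L2_norm_sq M \<phi>"
    using \<open>0 < A\<close> \<phi>(2) frame(1)
    by (intro translate_sum_arbitrarily_small[OF \<Lambda> _ _ \<open>0 < \<beta>\<close> _ _ \<open>max \<alpha> 0 < _\<close> decay_sq]) auto
  then obtain c where "(\<Sum>\<^sub>\<infinity>l\<in>\<Lambda>. (cmod (fourier_dens M \<phi> (l - c)))\<^sup>2) < A * L2_norm_sq M \<phi>" ..
  then show False using frame(2)[of c] by simp
qed

end
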